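(* Let $h>0$, $\Omega\in\mathbb{R}$, $g<0$. Consider the discrete Gross–Pitaevskii lattice $$i\dot{\phi}_n+\frac{1}{h^2}(\phi_{n+1}-2\phi_n+\phi_{n-1})-\Omega^2(hn)^2\phi_n-g|\phi_n|^2\phi_n=0,\quad n\in\mathbb{Z},$$ with vanishing boundary conditions $\lim_{|n|\to\infty}\phi_n(t)=0$ for all $t\ge0$. Let the initial datum $\phi(0)$ have finite discrete variance, $V_d(0):=h\sum_{n\in\mathbb{Z}}(hn)^2|\phi_n(0)|^2<\infty$, and let $\phi\in C^1([0,\infty),l^2)$ be the corresponding global-in-time solution. Then $$V_d(t):=h\sum_{n\in\mathbb{Z}}(hn)^2|\phi_n(t)|^2<\infty\quad\text{for all } t>0.$$
   Context: $l^2$ is the space of complex sequences $u=(u_n)_{n\in\mathbb{Z}}$ with $\|u\|_{l^2}^2=h\sum_{n}|u_n|^2<\infty$. *)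

theory Defs
  imports "HOL-Analysis.Analysis"
begin

definition l2seq :: "(int \<Rightarrow> complex) \<Rightarrow> bool" where
  "l2seq u \<longleftrightarrow> (\<lambda>n. (cmod (u n))^2) summable_on UNIV"

definition l2norm :: "real \<Rightarrow> (int \<Rightarrow> complex) \<Rightarrow> real" where
  "l2norm h u = sqrt (h * (\<Sum>\<^sub>\<infinity>n. (cmod (u n))^2))"

definition C1_l2 :: "real \<Rightarrow> (real \<Rightarrow> int \<Rightarrow> complex) \<Rightarrow> (real \<Rightarrow> int \<Rightarrow> complex) \<Rightarrow> bool" where
  "C1_l2 h \<phi> \<phi>' \<longleftrightarrow>
     (\<forall>t\<ge>0. l2seq (\<phi> t) \<and> l2seq (\<phi>' t)) \<and>
     (\<forall>t\<ge>0. ((\<lambda>s. l2norm h (\<lambda>n. \<phi> s n - \<phi> t n)) \<longlongrightarrow> 0) (at t within {0..})) \<and>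
     (\<forall>t\<ge>0. ((\<lambda>s. l2norm h (\<lambda>n. (\<phi> s n - \<phi> t n) / of_real (s - t) - \<phi>' t n))
                 \<longlongrightarrow> 0) (at t within {0..})) \<and>
     (\<forall>t\<ge>0. ((\<lambda>s. l2norm h (\<lambda>n. \<phi>' s n - \<phi>' t n)) \<longlongrightarrow> 0) (at t within {0..}))"

definition finite_variance :: "real \<Rightarrow> (int \<Rightarrow> complex) \<Rightarrow> bool" where
  "finite_variance h u \<longleftrightarrow> (\<lambda>n. h * (h * of_int n)^2 * (cmod (u n))^2) summable_on UNIV"

end

theory Submission
  imports Defs
begin

(* The truncated second moments W_K(t) = sum_{|n| <= K} rho_K(n)^2 |phi_n(t)|^2, with the tent
   weight rho_K(n) = max 0 (min |n| (K - |n|)), are finite sums and can be differentiated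
   termwise. The equation gives the local mass balance d/dt |phi_n|^2 = (2/h^2) (J_n - J_{n-1})
   with the current J_n = Im (conj phi_{n+1} phi_n): the potential and the nonlinearity are real
   multiples of phi_n and drop out, so neither Omega nor the sign of g matters. Summing by parts
   (rho_K vanishes at -K and K + 1) and using |rho_K(n) - rho_K(n+1)| <= 1 yields
   W_K' <= (2/h^2) (W_K + 2 B), where B bounds the l^2 mass on [0, t]; such a B exists because
   phi is continuous into l^2. Gronwall bounds W_K(t) independently of K, and since
   rho_{2N}(n) = |n| for |n| <= N, the partial sums of the variance at time t stay bounded. *)

definition l2mass :: "(int \<Rightarrow> complex) \<Rightarrow> real" where
  "l2mass u = (\<Sum>\<^sub>\<infinity>n. (cmod (u n))^2)"

lemma l2mass_nonneg: "0 \<le> l2mass u"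
  unfolding l2mass_def by (intro infsum_nonneg) auto

lemma sum_le_l2mass:
  assumes "l2seq u" "finite F"
  shows "(\<Sum>n\<in>F. (cmod (u n))^2) \<le> l2mass u"
  using assms unfolding l2seq_def l2mass_def by (intro finite_sum_le_infsum) auto

lemma l2norm_eq: "l2norm h u = sqrt (h * l2mass u)"
  unfolding l2norm_def l2mass_def ..

lemma cmod_le_l2norm:
  assumes "l2seq u" "h > 0"
  shows "cmod (u n) \<le> l2norm h u / sqrt h"
proof -
  have "(cmod (u n))^2 \<le> l2mass u"
    using sum_le_l2mass[OF assms(1), of "{n}"] by simp
  hence "cmod (u n) \<le> sqrt (l2mass u)"
    using real_le_rsqrt by blast
  also have "\<dots> = l2norm h u / sqrt h"
    using assms(2) by (simp add: l2norm_eq real_sqrt_mult)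
  finally show ?thesis .
qed

lemma cmod_add_power2_le: "(cmod (a + b))^2 \<le> 2 * (cmod a)^2 + 2 * (cmod b)^2"
proof -
  have "(cmod (a + b))^2 \<le> (cmod a + cmod b)^2"
    by (rule power_mono[OF norm_triangle_ineq]) simp
  also have "\<dots> \<le> 2 * (cmod a)^2 + 2 * (cmod b)^2"
    using sum_squares_ge_zero[of "cmod a - cmod b" 0] by (simp add: power2_eq_square algebra_simps)
  finally show ?thesis .
qed

lemma l2seq_add:
  assumes "l2seq u" "l2seq v"
  shows "l2seq (\<lambda>n. u n + v n)"
proof -
  have "(\<lambda>n. 2 * (cmod (u n))^2 + 2 * (cmod (v n))^2) summable_on UNIV"
    using assms unfolding l2seq_def by (intro summable_on_add summable_on_cmult_right)
  then show ?thesis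
    unfolding l2seq_def by (rule summable_on_comparison_test) (auto intro: cmod_add_power2_le)
qed

lemma l2seq_scale:
  assumes "l2seq u"
  shows "l2seq (\<lambda>n. c * u n)"
proof -
  have "(\<lambda>n. (cmod c)^2 * (cmod (u n))^2) summable_on UNIV"
    using assms unfolding l2seq_def by (intro summable_on_cmult_right)
  thus ?thesis unfolding l2seq_def by (simp add: norm_mult power_mult_distrib)
qed

lemma l2seq_diff:
  assumes "l2seq u" "l2seq v"
  shows "l2seq (\<lambda>n. u n - v n)"
  using l2seq_add[OF assms(1) l2seq_scale[OF assms(2), of "-1"]] by simp

lemma l2seq_divide:
  assumes "l2seq u"
  shows "l2seq (\<lambda>n. u n / c)"
  using l2seq_scale[OF assms, of "inverse c"] by (simp add: field_simps)

lemma l2mass_add_le: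
  assumes "l2seq u" "l2seq v"
  shows "l2mass (\<lambda>n. u n + v n) \<le> 2 * l2mass u + 2 * l2mass v"
proof -
  have "l2mass (\<lambda>n. u n + v n) \<le> (\<Sum>\<^sub>\<infinity>n. 2 * (cmod (u n))^2 + 2 * (cmod (v n))^2)"
    unfolding l2mass_def using l2seq_add[OF assms] assms unfolding l2seq_def
    by (intro infsum_mono summable_on_add summable_on_cmult_right cmod_add_power2_le)
  also have "\<dots> = 2 * l2mass u + 2 * l2mass v"
    using assms unfolding l2seq_def l2mass_def
    by (subst infsum_add) (auto intro: summable_on_cmult_right simp: infsum_cmult_right)
  finally show ?thesis .
qed

lemma compact_locally_bounded_above_imp_bounded_above:
  fixes f :: "'a::metric_space \<Rightarrow> real"
  assumes "compact K"
    and "\<And>x. x \<in> K \<Longrightarrow> \<exists>e>0. \<exists>b. \<forall>y\<in>K. dist y x < e \<longrightarrow> f y \<le> b"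
  shows "\<exists>B. \<forall>y\<in>K. f y \<le> B"
proof -
  obtain e b where eb: "\<And>x. x \<in> K \<Longrightarrow> e x > 0 \<and> (\<forall>y\<in>K. dist y x < e x \<longrightarrow> f y \<le> b x)"
    using assms(2) by metis
  have "K \<subseteq> (\<Union>x\<in>K. ball x (e x))"
    using eb by force
  then obtain C where C: "C \<subseteq> K" "finite C" "K \<subseteq> (\<Union>x\<in>C. ball x (e x))"
    using compactE_image[OF assms(1), of K "\<lambda>x. ball x (e x)"] by blast
  have "f y \<le> (\<Sum>x\<in>C. \<bar>b x\<bar>)" if "y \<in> K" for y
  proof -
    obtain x where x: "x \<in> C" "dist y x < e x"
      using C(3) \<open>y \<in> K\<close> by (auto simp: dist_commute)
    have "f y \<le> \<bar>b x\<bar>"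
      using eb[of x] x C(1) \<open>y \<in> K\<close> by force
    also have "\<dots> \<le> (\<Sum>x\<in>C. \<bar>b x\<bar>)"
      using x(1) C(2) by (intro member_le_sum) auto
    finally show ?thesis .
  qed
  then show ?thesis by blast
qed

lemma C1_l2_l2seq:
  assumes "C1_l2 h \<phi> \<phi>'" "t \<ge> 0"
  shows "l2seq (\<phi> t)" "l2seq (\<phi>' t)"
  using assms unfolding C1_l2_def by auto

lemma C1_l2_l2mass_locally_bounded:
  assumes h: "h > 0" and C: "C1_l2 h \<phi> \<phi>'" and t: "t \<ge> 0"
  shows "\<exists>e>0. \<forall>s\<ge>0. dist s t < e \<longrightarrow> l2mass (\<phi> s) \<le> 2 * l2mass (\<phi> t) + 2 / h"
proof -
  have "((\<lambda>s. l2norm h (\<lambda>n. \<phi> s n - \<phi> t n)) \<longlongrightarrow> 0) (at t within {0..})"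
    using C t unfolding C1_l2_def by blast
  then have "eventually (\<lambda>s. l2norm h (\<lambda>n. \<phi> s n - \<phi> t n) < 1) (at t within {0..})"
    by (rule order_tendstoD) simp
  then obtain e where e: "e > 0"
    and close: "\<And>s. s \<ge> 0 \<Longrightarrow> s \<noteq> t \<Longrightarrow> dist s t < e \<Longrightarrow>
                  l2norm h (\<lambda>n. \<phi> s n - \<phi> t n) < 1"
    unfolding eventually_at by auto
  have "l2mass (\<phi> s) \<le> 2 * l2mass (\<phi> t) + 2 / h" if s: "s \<ge> 0" "dist s t < e" for s
  proof (cases "s = t")
    case True
    then show ?thesis using l2mass_nonneg[of "\<phi> t"] h by simp
  next
    case False
    define d where "d n = \<phi> s n - \<phi> t n" for n
    have l2: "l2seq (\<phi> t)" "l2seq d"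
      using C1_l2_l2seq[OF C] s t unfolding d_def by (auto intro: l2seq_diff)
    have "sqrt (h * l2mass d) < 1"
      using close[OF s(1) False s(2)] unfolding d_def l2norm_eq .
    then have "l2mass d < 1 / h"
      using h by (simp add: field_simps mult.commute)
    moreover have "l2mass (\<phi> s) \<le> 2 * l2mass (\<phi> t) + 2 * l2mass d"
      using l2mass_add_le[OF l2] unfolding d_def by simp
    ultimately show ?thesis by simp
  qed
  with e show ?thesis by blast
qed

lemma C1_l2_l2mass_bounded:
  assumes "h > 0" "C1_l2 h \<phi> \<phi>'"
  shows "\<exists>B. \<forall>s\<in>{0..T}. l2mass (\<phi> s) \<le> B"
proof (rule compact_locally_bounded_above_imp_bounded_above)
  fix t :: real assume "t \<in> {0..T}"
  then obtain e where "e > 0" "\<forall>s\<ge>0. dist s t < e \<longrightarrow> l2mass (\<phi> s) \<le> 2 * l2mass (\<phi> t) + 2 / h"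
    using C1_l2_l2mass_locally_bounded[OF assms] by auto
  then show "\<exists>e>0. \<exists>b. \<forall>s\<in>{0..T}. dist s t < e \<longrightarrow> l2mass (\<phi> s) \<le> b"
    by (intro exI[of _ e] conjI exI[of _ "2 * l2mass (\<phi> t) + 2 / h"]) auto
qed simp

lemma C1_l2_coordinate_tendsto:
  assumes h: "h > 0" and C: "C1_l2 h \<phi> \<phi>'" and t: "t \<ge> 0"
  shows "((\<lambda>s. (\<phi> s n - \<phi> t n) / of_real (s - t)) \<longlongrightarrow> \<phi>' t n) (at t within {0..})"
proof -
  define q where "q s m = (\<phi> s m - \<phi> t m) / of_real (s - t) - \<phi>' t m" for s m
  have "((\<lambda>s. l2norm h (q s)) \<longlongrightarrow> 0) (at t within {0..})"
    using C t unfolding C1_l2_def q_def by blast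
  then have lim: "((\<lambda>s. l2norm h (q s) / sqrt h) \<longlongrightarrow> 0) (at t within {0..})"
    using tendsto_divide_zero by blast
  have "norm (q s n) \<le> l2norm h (q s) / sqrt h" if "s \<in> {0..}" for s
  proof -
    have "l2seq (q s)"
      using C1_l2_l2seq[OF C] that t unfolding q_def
      by (auto intro!: l2seq_diff l2seq_divide)
    then show ?thesis using cmod_le_l2norm h by simp
  qed
  then have "((\<lambda>s. q s n) \<longlongrightarrow> 0) (at t within {0..})"
    by (intro Lim_null_comparison[OF _ lim] eventually_at_filter[THEN iffD2] always_eventually) auto
  then show ?thesis
    unfolding q_def by (rule LIM_zero_cancel)
qed

lemma C1_l2_cmod_power2_has_derivative:
  assumes "h > 0" "C1_l2 h \<phi> \<phi>'" "t \<ge> 0"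
  shows "((\<lambda>s. (cmod (\<phi> s n))^2) has_real_derivative 2 * Re (cnj (\<phi> t n) * \<phi>' t n))
           (at t within {0..})"
proof -
  note lim = C1_l2_coordinate_tendsto[OF assms, of n]
  have "((\<lambda>s. Re (\<phi> s n)) has_real_derivative Re (\<phi>' t n)) (at t within {0..})"
    using tendsto_Re[OF lim] unfolding has_field_derivative_iff by (simp add: Re_divide_of_real)
  moreover have "((\<lambda>s. Im (\<phi> s n)) has_real_derivative Im (\<phi>' t n)) (at t within {0..})"
    using tendsto_Im[OF lim] unfolding has_field_derivative_iff by (simp add: Im_divide_of_real)
  ultimately have "((\<lambda>s. Re (\<phi> s n) * Re (\<phi> s n) + Im (\<phi> s n) * Im (\<phi> s n))
      has_real_derivative Re (\<phi>' t n) * Re (\<phi> t n) + Re (\<phi>' t n) * Re (\<phi> t n)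
        + (Im (\<phi>' t n) * Im (\<phi> t n) + Im (\<phi>' t n) * Im (\<phi> t n))) (at t within {0..})"
    by (intro DERIV_add DERIV_mult)
  moreover have "(\<lambda>s. (cmod (\<phi> s n))^2)
                  = (\<lambda>s. Re (\<phi> s n) * Re (\<phi> s n) + Im (\<phi> s n) * Im (\<phi> s n))"
    unfolding cmod_power2 by (simp only: power2_eq_square)
  ultimately show ?thesis
    by (simp add: algebra_simps)
qed

definition current :: "(int \<Rightarrow> complex) \<Rightarrow> int \<Rightarrow> real" where
  "current u n = Im (cnj (u (n + 1)) * u n)"

lemma abs_current_le: "\<bar>current u n\<bar> \<le> cmod (u n) * cmod (u (n + 1))"
  unfolding current_def using abs_Im_le_cmod[of "cnj (u (n + 1)) * u n"]
  by (simp add: norm_mult mult.commute)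

lemma lattice_schroedinger_mass_balance:
  fixes u :: "int \<Rightarrow> complex" and v :: complex and h r :: real
  assumes "\<i> * v + (u (n + 1) - 2 * u n + u (n - 1)) / (of_real h)^2 - of_real r * u n = 0"
  shows "Re (cnj (u n) * v) = (current u n - current u (n - 1)) / h^2"
proof -
  define D where "D = u (n + 1) - 2 * u n + u (n - 1)"
  have "v = - \<i> * (\<i> * v)"
    by simp
  also have "\<i> * v = - (D / of_real (h^2) - of_real r * u n)"
    using assms unfolding D_def by (simp add: algebra_simps)
  finally have v_eq: "v = \<i> * (D / of_real (h^2) - of_real r * u n)"
    by (metis minus_diff_eq mult_minus_left mult_minus_right)
  show ?thesis
    unfolding v_eq current_def D_def
    by (simp add: Re_divide_of_real Im_divide_of_real algebra_simps diff_divide_distrib add_divide_distrib)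
qed

lemma sum_by_parts_int:
  fixes w J :: "int \<Rightarrow> 'a::comm_ring"
  assumes "a \<le> b"
  shows "(\<Sum>n=a..b. w n * (J n - J (n - 1)))
           = (\<Sum>n=a..b. (w n - w (n + 1)) * J n) + w (b + 1) * J b - w a * J (a - 1)"
  using assms
proof (induction b rule: int_ge_induct)
  case base
  then show ?case by (simp add: algebra_simps)
next
  case (step b)
  have "{a..b + 1} = insert (b + 1) {a..b}"
    using step.hyps by auto
  with step show ?case by (simp add: algebra_simps)
qed

definition tent :: "int \<Rightarrow> int \<Rightarrow> real" where
  "tent K n = max 0 (min \<bar>n\<bar> (K - \<bar>n\<bar>))"

lemma tent_nonneg: "0 \<le> tent K n"
  unfolding tent_def by simp

lemma tent_step_le: "\<bar>tent K n - tent K (n + 1)\<bar> \<le> 1"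
  unfolding tent_def by (auto simp: abs_if)

lemma tent_vanishes_at_ends:
  assumes "0 \<le> K"
  shows "tent K (- K) = 0" "tent K (K + 1) = 0"
  using assms unfolding tent_def by auto

lemma tent_power2_le: "(tent K n)^2 \<le> (of_int n)^2"
proof -
  have "tent K n \<le> \<bar>of_int n\<bar>"
    unfolding tent_def by auto
  then have "(tent K n)^2 \<le> \<bar>of_int n\<bar>^2"
    by (rule power_mono) (rule tent_nonneg)
  then show ?thesis
    by simp
qed

lemma tent_double_eq_abs: "\<bar>n\<bar> \<le> N \<Longrightarrow> tent (2 * N) n = \<bar>n\<bar>"
  unfolding tent_def by auto

definition tent_moment :: "int \<Rightarrow> (int \<Rightarrow> complex) \<Rightarrow> real" where
  "tent_moment K u = (\<Sum>n=-K..K. (tent K n)^2 * (cmod (u n))^2)"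

lemma power2_diff_mult_le:
  fixes a b j x y :: real
  assumes "0 \<le> a" "0 \<le> b" "\<bar>a - b\<bar> \<le> 1" "\<bar>j\<bar> \<le> x * y" "0 \<le> x" "0 \<le> y"
  shows "(a^2 - b^2) * j \<le> a^2 * x^2 + 3/2 * y^2 + 1/2 * x^2"
proof -
  have "(a^2 - b^2) * j = (a - b) * (a + b) * j"
    by (simp add: power2_eq_square algebra_simps)
  also have "\<dots> \<le> \<bar>a - b\<bar> * (a + b) * \<bar>j\<bar>"
    using assms(1,2) abs_ge_self[of "(a - b) * (a + b) * j"] by (simp add: abs_mult)
  also have "\<dots> \<le> 1 * (2 * a + 1) * (x * y)"
    using assms by (intro mult_mono) auto
  also have "\<dots> \<le> a^2 * x^2 + 3/2 * y^2 + 1/2 * x^2"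
    using sum_squares_ge_zero[of "a * x - y" 0] sum_squares_ge_zero[of "x - y" 0]
    by (simp add: power2_eq_square algebra_simps)
  finally show ?thesis .
qed

lemma tent_flux_le:
  assumes u: "l2seq u" and K: "0 \<le> K"
  shows "(\<Sum>n=-K..K. (tent K n)^2 * (current u n - current u (n - 1)))
           \<le> tent_moment K u + 2 * l2mass u"
proof -
  let ?w = "\<lambda>n. (tent K n)^2" and ?m = "\<lambda>n. (cmod (u n))^2"
  have "(\<Sum>n=-K..K. ?w n * (current u n - current u (n - 1)))
          = (\<Sum>n=-K..K. (?w n - ?w (n + 1)) * current u n)"
    using sum_by_parts_int[of "-K" K ?w "current u"] K tent_vanishes_at_ends[OF K] by simp
  also have "\<dots> \<le> (\<Sum>n=-K..K. ?w n * ?m n + 3/2 * ?m (n + 1) + 1/2 * ?m n)"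
    by (intro sum_mono power2_diff_mult_le tent_nonneg tent_step_le abs_current_le norm_ge_zero)
  also have "\<dots> = tent_moment K u + 3/2 * (\<Sum>n=-K..K. ?m (n + 1)) + 1/2 * (\<Sum>n=-K..K. ?m n)"
    unfolding tent_moment_def by (simp add: sum.distrib sum_distrib_left)
  also have "(\<Sum>n=-K..K. ?m (n + 1)) = (\<Sum>n\<in>(\<lambda>n. n + 1) ` {-K..K}. ?m n)"
    by (subst sum.reindex) (auto simp: inj_on_def)
  also have "\<dots> \<le> l2mass u"
    using u by (intro sum_le_l2mass) auto
  finally show ?thesis
    using sum_le_l2mass[OF u, of "{-K..K}"] by simp
qed

lemma gronwall_exp_bound:
  fixes W W' :: "real \<Rightarrow> real"
  assumes "0 \<le> t"
    and deriv: "\<And>s. 0 \<le> s \<Longrightarrow> s \<le> t \<Longrightarrow> (W has_real_derivative W' s) (at s within {0..t})"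
    and growth: "\<And>s. 0 \<le> s \<Longrightarrow> s \<le> t \<Longrightarrow> W' s \<le> c * W s"
  shows "W t \<le> W 0 * exp (c * t)"
proof -
  define G where "G s = W s * exp (- c * s)" for s
  have G_deriv: "(G has_real_derivative (W' s - c * W s) * exp (- c * s)) (at s within {0..t})"
    if "0 \<le> s" "s \<le> t" for s
    unfolding G_def using deriv[OF that]
    by (auto intro!: derivative_eq_intros simp: algebra_simps)
  have "G t \<le> G 0"
  proof (rule DERIV_nonpos_imp_decreasing_open[OF \<open>0 \<le> t\<close>])
    fix s :: real assume s: "0 < s" "s < t"
    then have "(G has_real_derivative (W' s - c * W s) * exp (- c * s)) (at s)"
      using G_deriv[of s] at_within_Icc_at[of 0 s t] by simp
    moreover have "(W' s - c * W s) * exp (- c * s) \<le> 0"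
      using growth[of s] s by (simp add: mult_nonpos_nonneg)
    ultimately show "\<exists>y. (G has_real_derivative y) (at s) \<and> y \<le> 0"
      by blast
  next
    show "continuous_on {0..t} G"
      by (auto simp: continuous_on_eq_continuous_within intro: DERIV_continuous[OF G_deriv])
  qed
  then show ?thesis
    unfolding G_def by (simp add: exp_minus field_simps)
qed

lemma tent_moment_growth:
  assumes h: "h > 0" and C: "C1_l2 h \<phi> \<phi>'"
    and balance: "\<And>s n. 0 \<le> s \<Longrightarrow>
          Re (cnj (\<phi> s n) * \<phi>' s n) = (current (\<phi> s) n - current (\<phi> s) (n - 1)) / h^2"
    and t: "0 \<le> t" and K: "0 \<le> K"
    and B: "\<And>s. 0 \<le> s \<Longrightarrow> s \<le> t \<Longrightarrow> l2mass (\<phi> s) \<le> B"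
  shows "tent_moment K (\<phi> t) \<le> (tent_moment K (\<phi> 0) + 2 * B) * exp (2 / h^2 * t)"
proof -
  define c where "c = 2 / h^2"
  define W where "W s = tent_moment K (\<phi> s) + 2 * B" for s
  define W' where
    "W' s = c * (\<Sum>n=-K..K. (tent K n)^2 * (current (\<phi> s) n - current (\<phi> s) (n - 1)))" for s
  have "(W has_real_derivative W' s) (at s within {0..t})" if s: "0 \<le> s" "s \<le> t" for s
  proof -
    have "((\<lambda>s. tent_moment K (\<phi> s)) has_real_derivative
        (\<Sum>n=-K..K. (tent K n)^2 * (2 * Re (cnj (\<phi> s n) * \<phi>' s n)))) (at s within {0..})"
      unfolding tent_moment_def
      by (intro DERIV_sum DERIV_cmult C1_l2_cmod_power2_has_derivative[OF h C s(1)])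
    moreover have "(\<Sum>n=-K..K. (tent K n)^2 * (2 * Re (cnj (\<phi> s n) * \<phi>' s n))) = W' s"
      unfolding W'_def c_def balance[OF s(1)]
      by (simp add: sum_distrib_left algebra_simps diff_divide_distrib)
    ultimately have "(W has_real_derivative W' s + 0) (at s within {0..})"
      unfolding W_def by (intro DERIV_add DERIV_const) simp
    then show ?thesis
      by (simp add: has_field_derivative_subset)
  qed
  moreover have "W' s \<le> c * W s" if s: "0 \<le> s" "s \<le> t" for s
  proof -
    have "W' s \<le> c * (tent_moment K (\<phi> s) + 2 * l2mass (\<phi> s))"
      unfolding W'_def c_def using h C1_l2_l2seq[OF C s(1)]
      by (intro mult_left_mono tent_flux_le K) auto
    also have "\<dots> \<le> c * W s"
      unfolding W_def c_def using B[OF s] h by (intro mult_left_mono) auto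
    finally show ?thesis .
  qed
  ultimately have "W t \<le> W 0 * exp (c * t)"
    by (rule gronwall_exp_bound[OF t])
  moreover have "0 \<le> B"
    by (rule order_trans[OF l2mass_nonneg B[OF order_refl t]])
  ultimately show ?thesis
    unfolding W_def c_def by simp
qed

lemma second_moment_partial_sum_le:
  assumes h: "h > 0" and C: "C1_l2 h \<phi> \<phi>'"
    and balance: "\<And>s n. 0 \<le> s \<Longrightarrow>
          Re (cnj (\<phi> s n) * \<phi>' s n) = (current (\<phi> s) n - current (\<phi> s) (n - 1)) / h^2"
    and moment0: "(\<lambda>n. (of_int n)^2 * (cmod (\<phi> 0 n))^2) summable_on UNIV"
    and t: "0 \<le> t" and N: "0 \<le> N"
    and B: "\<And>s. 0 \<le> s \<Longrightarrow> s \<le> t \<Longrightarrow> l2mass (\<phi> s) \<le> B"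
  shows "(\<Sum>n=-N..N. (of_int n)^2 * (cmod (\<phi> t n))^2)
           \<le> ((\<Sum>\<^sub>\<infinity>n. (of_int n)^2 * (cmod (\<phi> 0 n))^2) + 2 * B) * exp (2 / h^2 * t)"
proof -
  define K where "K = 2 * N"
  have "(\<Sum>n=-N..N. (of_int n)^2 * (cmod (\<phi> t n))^2)
          = (\<Sum>n=-N..N. (tent K n)^2 * (cmod (\<phi> t n))^2)"
    unfolding K_def by (intro sum.cong) (auto simp: tent_double_eq_abs)
  also have "\<dots> \<le> tent_moment K (\<phi> t)"
    unfolding tent_moment_def K_def using N by (intro sum_mono2) auto
  also have "\<dots> \<le> (tent_moment K (\<phi> 0) + 2 * B) * exp (2 / h^2 * t)"
    using N unfolding K_def by (intro tent_moment_growth[OF h C balance t _ B]) auto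
  also have "\<dots> \<le> ((\<Sum>\<^sub>\<infinity>n. (of_int n)^2 * (cmod (\<phi> 0 n))^2) + 2 * B) * exp (2 / h^2 * t)"
  proof (intro mult_right_mono add_right_mono)
    have "tent_moment K (\<phi> 0) \<le> (\<Sum>n=-K..K. (of_int n)^2 * (cmod (\<phi> 0 n))^2)"
      unfolding tent_moment_def
      by (intro sum_mono mult_right_mono tent_power2_le) auto
    also have "\<dots> \<le> (\<Sum>\<^sub>\<infinity>n. (of_int n)^2 * (cmod (\<phi> 0 n))^2)"
      using moment0 by (intro finite_sum_le_infsum) auto
    finally show "tent_moment K (\<phi> 0) \<le> (\<Sum>\<^sub>\<infinity>n. (of_int n)^2 * (cmod (\<phi> 0 n))^2)" .
  qed auto
  finally show ?thesis .
qed

lemma summable_on_int_if_symmetric_sums_bounded: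
  fixes f :: "int \<Rightarrow> real"
  assumes nonneg: "\<And>n. 0 \<le> f n" and bound: "\<And>N. 0 \<le> N \<Longrightarrow> (\<Sum>n=-N..N. f n) \<le> M"
  shows "f summable_on UNIV"
proof (rule nonneg_bdd_above_summable_on)
  show "bdd_above (sum f ` {F. F \<subseteq> UNIV \<and> finite F})"
  proof (rule bdd_aboveI2)
    fix F :: "int set" assume "F \<in> {F. F \<subseteq> UNIV \<and> finite F}"
    then have "finite F" by simp
    define N where "N = (\<Sum>n\<in>F. \<bar>n\<bar>)"
    have "0 \<le> N"
      unfolding N_def by (intro sum_nonneg) auto
    moreover have "F \<subseteq> {-N..N}"
    proof
      fix n assume "n \<in> F"
      then have "\<bar>n\<bar> \<le> N"
        unfolding N_def using \<open>finite F\<close> by (intro member_le_sum) auto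
      then show "n \<in> {-N..N}" by auto
    qed
    ultimately show "sum f F \<le> M"
      using order_trans[OF sum_mono2[OF finite_atLeastAtMost_int _ nonneg] bound] by blast
  qed
qed (use nonneg in auto)

lemma finite_variance_iff:
  assumes "h > 0"
  shows "finite_variance h u \<longleftrightarrow> (\<lambda>n. (of_int n)^2 * (cmod (u n))^2) summable_on UNIV"
proof -
  have "(\<lambda>n. h * (h * of_int n)^2 * (cmod (u n))^2) = (\<lambda>n. h^3 * ((of_int n)^2 * (cmod (u n))^2))"
    by (rule ext) (simp add: power3_eq_cube power2_eq_square algebra_simps)
  then show ?thesis
    unfolding finite_variance_def using assms by (simp add: summable_on_cmult_right')
qed

theorem mainTheorem3:
  fixes h \<Omega> g :: real
    and \<phi> \<phi>' :: "real \<Rightarrow> int \<Rightarrow> complex"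
  assumes "h > 0" and "g < 0"
    and "C1_l2 h \<phi> \<phi>'"
    and "\<forall>t\<ge>0. \<forall>n::int.
           \<i> * \<phi>' t n + (\<phi> t (n + 1) - 2 * \<phi> t n + \<phi> t (n - 1)) / (of_real h)^2
           - of_real (\<Omega>^2 * (h * of_int n)^2) * \<phi> t n
           - of_real g * (of_real (cmod (\<phi> t n)))^2 * \<phi> t n = 0"
    and "\<forall>t\<ge>0. (\<phi> t \<longlongrightarrow> 0) at_top \<and> (\<phi> t \<longlongrightarrow> 0) at_bot"
    and "finite_variance h (\<phi> 0)"
  shows "\<forall>t>0. finite_variance h (\<phi> t)"
proof (intro allI impI)
  fix t :: real assume "t > 0"
  have balance: "Re (cnj (\<phi> s n) * \<phi>' s n) = (current (\<phi> s) n - current (\<phi> s) (n - 1)) / h^2"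
    if "0 \<le> s" for s n
  proof (rule lattice_schroedinger_mass_balance)
    show "\<i> * \<phi>' s n + (\<phi> s (n + 1) - 2 * \<phi> s n + \<phi> s (n - 1)) / (of_real h)^2
          - of_real (\<Omega>^2 * (h * of_int n)^2 + g * (cmod (\<phi> s n))^2) * \<phi> s n = 0"
      using assms(4)[rule_format, OF that, of n] by (simp add: algebra_simps)
  qed
  obtain B where "\<forall>s\<in>{0..t}. l2mass (\<phi> s) \<le> B"
    using C1_l2_l2mass_bounded[OF assms(1,3)] by blast
  then have "(\<Sum>n=-N..N. (of_int n)^2 * (cmod (\<phi> t n))^2)
               \<le> ((\<Sum>\<^sub>\<infinity>n. (of_int n)^2 * (cmod (\<phi> 0 n))^2) + 2 * B) * exp (2 / h^2 * t)"
    if "0 \<le> N" for N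
    using assms(6) \<open>t > 0\<close> that unfolding finite_variance_iff[OF assms(1)]
    by (intro second_moment_partial_sum_le[OF assms(1,3) balance]) auto
  then show "finite_variance h (\<phi> t)"
    unfolding finite_variance_iff[OF assms(1)]
    by (intro summable_on_int_if_symmetric_sums_bounded) auto
qed

end
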